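(* Let $M$ be a magma satisfying $(xy)z = xy$ and $x(yz) = xy$ for all $x,y,z\in M$. Then $M$ satisfies $xy = xz$ and $(xy)z = xy$ for all $x,y,z\in M$ if and only if $M$ avoids the magma $P$ on $\{0,1,2,3\}$ with Cayley table \[ \begin{array}{c|cccc} P & 0 & 1 & 2 & 3 \\ \hline 0 & 2 & 3 & 2 & 2 \\ 1 & 1 & 1 & 1 & 1 \\ 2 & 2 & 2 & 2 & 2 \\ 3 & 3 & 3 & 3 & 3 \end{array}. \]
   Context: A magma is a nonempty set with a binary operation, written by juxtaposition. A magma $M$ avoids a magma $F$ if no submagma of $M$ is isomorphic to $F$. In the Cayley table, the entry in row $i$, column $j$ is $i\cdot j$. *)

theory Defs
  imports Main
begin

definition magma :: "'a set \<Rightarrow> ('a \<Rightarrow> 'a \<Rightarrow> 'a) \<Rightarrow> bool" where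
  "magma M f \<longleftrightarrow> M \<noteq> {} \<and> (\<forall>x\<in>M. \<forall>y\<in>M. f x y \<in> M)"

definition submagma :: "'a set \<Rightarrow> ('a \<Rightarrow> 'a \<Rightarrow> 'a) \<Rightarrow> 'a set \<Rightarrow> bool" where
  "submagma M f S \<longleftrightarrow> S \<noteq> {} \<and> S \<subseteq> M \<and> (\<forall>x\<in>S. \<forall>y\<in>S. f x y \<in> S)"

definition magma_iso :: "'a set \<Rightarrow> ('a \<Rightarrow> 'a \<Rightarrow> 'a) \<Rightarrow> 'b set \<Rightarrow> ('b \<Rightarrow> 'b \<Rightarrow> 'b) \<Rightarrow> bool" where
  "magma_iso A f B g \<longleftrightarrow> (\<exists>h. bij_betw h A B \<and> (\<forall>x\<in>A. \<forall>y\<in>A. h (f x y) = g (h x) (h y)))"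

definition avoids :: "'a set \<Rightarrow> ('a \<Rightarrow> 'a \<Rightarrow> 'a) \<Rightarrow> 'b set \<Rightarrow> ('b \<Rightarrow> 'b \<Rightarrow> 'b) \<Rightarrow> bool" where
  "avoids M f F g \<longleftrightarrow> \<not> (\<exists>S. submagma M f S \<and> magma_iso F g S f)"

text \<open>The magma P on {0,1,2,3}; entry in row i, column j is i*j.\<close>
definition P_carrier :: "nat set" where "P_carrier = {0,1,2,3}"

definition P_op :: "nat \<Rightarrow> nat \<Rightarrow> nat" where
  "P_op i j = (if i = 0 then (if j = 1 then 3 else 2) else i)"

end

theory Submission
  imports Defs
begin

text \<open>Under the two identities, (xy)z = xy already holds, so the claim is that M is
  left-constant (xy = xz) iff it avoids P. Left-constancy passes to submagmas and to isomorphic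
  copies, and P is not left-constant (01 = 3 but 00 = 2). Conversely, if ab \<noteq> aa, then
  a, bb, aa, ab are four distinct elements multiplying exactly like 0, 1, 2, 3 in P.\<close>

definition left_constant :: "'a set \<Rightarrow> ('a \<Rightarrow> 'a \<Rightarrow> 'a) \<Rightarrow> bool" where
  "left_constant M f \<longleftrightarrow> (\<forall>x\<in>M. \<forall>y\<in>M. \<forall>z\<in>M. f x y = f x z)"

lemma left_constant_subset:
  "left_constant M f \<Longrightarrow> S \<subseteq> M \<Longrightarrow> left_constant S f"
  unfolding left_constant_def by blast

lemma left_constant_iso:
  assumes "magma A f" and "magma_iso A f B g" and "left_constant B g"
  shows "left_constant A f"
  unfolding left_constant_def
proof (intro ballI)
  fix x y z assume xyz: "x \<in> A" "y \<in> A" "z \<in> A"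
  obtain h where bij: "bij_betw h A B" and hom: "\<forall>x\<in>A. \<forall>y\<in>A. h (f x y) = g (h x) (h y)"
    using assms(2) unfolding magma_iso_def by blast
  have "h (f x y) = h (f x z)"
    using xyz hom assms(3) bij_betwE[OF bij] unfolding left_constant_def by metis
  moreover have "f x y \<in> A" "f x z \<in> A"
    using xyz assms(1) unfolding magma_def by auto
  ultimately show "f x y = f x z"
    using bij_betw_imp_inj_on[OF bij] by (simp add: inj_on_eq_iff)
qed

lemma magma_P: "magma P_carrier P_op"
  by (auto simp: magma_def P_carrier_def P_op_def)

lemma not_left_constant_P: "\<not> left_constant P_carrier P_op"
  unfolding left_constant_def P_carrier_def by (force simp: P_op_def)

lemma avoids_P_if_left_constant:
  assumes "left_constant M f"
  shows "avoids M f P_carrier P_op"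
  unfolding avoids_def
proof
  assume "\<exists>S. submagma M f S \<and> magma_iso P_carrier P_op S f"
  then obtain S where "submagma M f S" and iso: "magma_iso P_carrier P_op S f"
    by blast
  then have "left_constant S f"
    using assms left_constant_subset unfolding submagma_def by blast
  then show False
    using left_constant_iso[OF magma_P iso] not_left_constant_P by blast
qed

lemma magma_iso_P_onto:
  assumes "distinct [p0, p1, p2, p3]"
    and "f p0 p0 = p2" "f p0 p1 = p3" "f p0 p2 = p2" "f p0 p3 = p2"
    and "\<forall>x\<in>{p1, p2, p3}. \<forall>y\<in>{p0, p1, p2, p3}. f x y = x"
  shows "magma_iso P_carrier P_op {p0, p1, p2, p3} f"
  unfolding magma_iso_def
proof (intro exI conjI)
  let ?ps = "[p0, p1, p2, p3]"
  show "bij_betw ((!) ?ps) P_carrier {p0, p1, p2, p3}"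
    by (rule bij_betw_nth) (use assms(1) in \<open>auto simp: P_carrier_def\<close>)
  show "\<forall>i\<in>P_carrier. \<forall>j\<in>P_carrier. ?ps ! P_op i j = f (?ps ! i) (?ps ! j)"
    using assms(2-6) by (simp add: P_carrier_def P_op_def)
qed

lemma not_avoids_P:
  assumes "magma M f"
    and absorb_right: "\<forall>x\<in>M. \<forall>y\<in>M. \<forall>z\<in>M. f (f x y) z = f x y"
    and absorb_inner: "\<forall>x\<in>M. \<forall>y\<in>M. \<forall>z\<in>M. f x (f y z) = f x y"
    and "a \<in> M" "b \<in> M" "f a b \<noteq> f a a"
  shows "\<not> avoids M f P_carrier P_op"
proof -
  define e c d where "e = f b b" and "c = f a a" and "d = f a b"
  have in_M: "e \<in> M" "c \<in> M" "d \<in> M"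
    using assms(1,4,5) unfolding magma_def e_def c_def d_def by auto
  have left_zero: "f x y = x" if "x \<in> {e, c, d}" "y \<in> M" for x y
    using that absorb_right assms(4,5) unfolding e_def c_def d_def by auto
  have row_a: "f a a = c" "f a e = d" "f a c = c" "f a d = c"
    using absorb_inner assms(4,5) unfolding e_def c_def d_def by auto
  have "c \<noteq> d" "e \<noteq> c" "e \<noteq> d"
    using assms(6) row_a unfolding c_def d_def by metis+
  moreover have "a \<noteq> c"
    using \<open>c \<noteq> d\<close> left_zero[of c b] assms(5) unfolding d_def by auto
  moreover have "a \<noteq> d"
    using \<open>c \<noteq> d\<close> left_zero[of d a] assms(4) unfolding c_def by auto
  moreover have "a \<noteq> e"
    using \<open>e \<noteq> d\<close> left_zero[of e e] in_M(1) row_a(2) by auto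
  ultimately have "distinct [a, e, c, d]"
    by auto
  then have iso: "magma_iso P_carrier P_op {a, e, c, d} f"
    by (rule magma_iso_P_onto) (use row_a left_zero assms(4) in_M in auto)
  have "submagma M f {a, e, c, d}"
    unfolding submagma_def using row_a left_zero assms(4) in_M by auto
  with iso show ?thesis
    unfolding avoids_def by blast
qed

lemma left_constant_iff_avoids_P:
  assumes "magma M f"
    and "\<forall>x\<in>M. \<forall>y\<in>M. \<forall>z\<in>M. f (f x y) z = f x y"
    and "\<forall>x\<in>M. \<forall>y\<in>M. \<forall>z\<in>M. f x (f y z) = f x y"
  shows "left_constant M f \<longleftrightarrow> avoids M f P_carrier P_op"
proof
  assume "avoids M f P_carrier P_op"
  then have "f x y = f x x" if "x \<in> M" "y \<in> M" for x y
    using not_avoids_P[OF assms] that by blast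
  then show "left_constant M f"
    unfolding left_constant_def by metis
qed (rule avoids_P_if_left_constant)

theorem mainTheorem15:
  fixes M :: "'a set" and f :: "'a \<Rightarrow> 'a \<Rightarrow> 'a"
  assumes "magma M f"
    and "\<forall>x\<in>M. \<forall>y\<in>M. \<forall>z\<in>M. f (f x y) z = f x y"
    and "\<forall>x\<in>M. \<forall>y\<in>M. \<forall>z\<in>M. f x (f y z) = f x y"
  shows "((\<forall>x\<in>M. \<forall>y\<in>M. \<forall>z\<in>M. f x y = f x z \<and> f (f x y) z = f x y)
          \<longleftrightarrow> avoids M f P_carrier P_op)"
  using left_constant_iff_avoids_P[OF assms] assms(2) unfolding left_constant_def by blast

end
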